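(* Let $n\ge 2$, $C>0$, let $x\in\mathcal{K}_{S+}$ be the true data, and let $\tilde{x}=x+\eta$ where either (i) $\eta$ has i.i.d. Laplace entries with mean $0$ and scale $b>0$, or (ii) $\eta\sim\mathcal{N}(0,\sigma^2 I_n)$ with $\sigma>0$. Then for every pair of indices $(i,j)$ with $x_i\le x_j$, $$\mathcal{B}(\pi_{S+})_i-\mathcal{B}(\pi_{S+})_j \;\ge\; \mathcal{B}((\pi_S)_+)_i-\mathcal{B}((\pi_S)_+)_j,$$ and $$\mathcal{B}(\pi_{S+})_i-\mathcal{B}(\pi_{S+})_j \;\le\; \mathcal{B}((\pi_S)_+)_i-\mathcal{B}((\pi_S)_+)_j + \mathbb{E}\big[T(\pi_S(\tilde{x}))\big].$$
   Context: Let $C>0$, $\mathcal{K}_S=\{v\in\mathbb{R}^n:\sum_i v_i=C\}$, $\mathcal{K}_{S+}=\{v\in\mathcal{K}_S: v\ge 0\}$; $\pi_S$ and $\pi_{S+}$ denote the Euclidean projections of $\mathbb{R}^n$ onto $\mathcal{K}_S$ and $\mathcal{K}_{S+}$ respectively. For $y\in\mathcal{K}_S$, $T(y)$ is the unique non-negative real $t$ with $\sum_i (y_i-t)_+=C$, where $(y)_+=\max\{y,0\}$ componentwise. For a map $\pi:\mathbb{R}^n\to\mathbb{R}^n$, its bias is $\mathcal{B}(\pi)=\mathbb{E}_{\tilde{x}}[\pi(\tilde{x})]-x\in\mathbb{R}^n$; in particular $\mathcal{B}((\pi_S)_+)=\mathbb{E}_{\tilde{x}}[(\pi_S(\tilde{x}))_+]-x$.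 *)

theory Defs
  imports "HOL-Analysis.Analysis" "HOL-Probability.Probability"
begin

definition K_S :: "real \<Rightarrow> (real ^ 'n) set" where
  "K_S C = {v. (\<Sum>i\<in>UNIV. v $ i) = C}"

definition K_Splus :: "real \<Rightarrow> (real ^ 'n) set" where
  "K_Splus C = {v \<in> K_S C. \<forall>i. 0 \<le> v $ i}"

definition proj_S :: "real \<Rightarrow> real ^ 'n \<Rightarrow> real ^ 'n" where
  "proj_S C y = closest_point (K_S C) y"

definition proj_Splus :: "real \<Rightarrow> real ^ 'n \<Rightarrow> real ^ 'n" where
  "proj_Splus C y = closest_point (K_Splus C) y"

definition pos_part :: "real ^ 'n \<Rightarrow> real ^ 'n" where
  "pos_part v = (\<chi> i. max (v $ i) 0)"

definition T_thr :: "real \<Rightarrow> real ^ 'n \<Rightarrow> real" where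
  "T_thr C y = (THE t. 0 \<le> t \<and> (\<Sum>i\<in>UNIV. max (y $ i - t) 0) = C)"

definition laplace_noise :: "real \<Rightarrow> (real ^ 'n) measure" where
  "laplace_noise b = density lborel
     (\<lambda>\<eta>. ennreal (\<Prod>i\<in>UNIV. exp (- \<bar>\<eta> $ i\<bar> / b) / (2 * b)))"

definition gauss_noise :: "real \<Rightarrow> (real ^ 'n) measure" where
  "gauss_noise \<sigma> = density lborel
     (\<lambda>\<eta>. ennreal (\<Prod>i\<in>UNIV. normal_density 0 \<sigma> (\<eta> $ i)))"

definition bias :: "(real ^ 'n) measure \<Rightarrow> real ^ 'n \<Rightarrow> (real ^ 'n \<Rightarrow> real ^ 'n) \<Rightarrow> real ^ 'n" where
  "bias N x p = (\<integral>\<eta>. p (x + \<eta>) \<partial>N) - x"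

end

theory Submission
  imports Defs
begin

text \<open>Write z = \<pi>_S(x + \<eta>) = x + \<eta> - ((\<Sum>(x + \<eta>) - C) / n) 1 and t = T(z), so that
  \<pi>_S+(x + \<eta>) = (z - t)_+. The difference between the two bias gaps is then E[F] with
  F = g(z_i) - g(z_j), where g(a) = (a - t)_+ - a_+ is nonincreasing with values in [-t, 0]; this
  gives F \<le> t and hence the upper bound. For the lower bound, swapping the i-th and j-th coordinates
  of the observation x + \<eta> is a Lebesgue measure preserving map \<phi> of the noise that commutes with
  \<pi>_S and T, so F \<circ> \<phi> = -F and E[F] = 1/2 \<integral> (f - f \<circ> \<phi>) F for the noise density f. Because f is a
  product of log-concave factors and x_i \<le> x_j, the factor f - f \<circ> \<phi> has the sign of z_j - z_i,
  which is also the sign of F.\<close>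

section \<open>Product densities on real vectors\<close>

definition iid_density :: "(real \<Rightarrow> real) \<Rightarrow> (real ^ 'n::finite) measure" where
  "iid_density h = density lborel (\<lambda>\<eta>. ennreal (\<Prod>k\<in>UNIV. h (\<eta> $ k)))"

lemma ennreal_prod_less_top:
  "(\<And>i. i \<in> A \<Longrightarrow> f i < \<infinity>) \<Longrightarrow> prod f A < (\<infinity> :: ennreal)"
  by (induct A rule: infinite_finite_induct) (auto simp: ennreal_mult_less_top)

lemma prod_Basis_vec: "(\<Prod>b\<in>(Basis :: (real ^ 'n) set). g b) = (\<Prod>k\<in>UNIV. g (axis k 1))"
proof -
  have "inj (\<lambda>k::'n. axis k (1::real))" by (auto intro!: injI simp: axis_eq_axis)
  moreover have "Basis = range (\<lambda>k::'n. axis k (1::real))" unfolding Basis_vec_def by auto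
  ultimately show ?thesis by (metis (no_types, lifting) prod.reindex_cong)
qed

lemma nn_integral_lborel_prod_vec:
  fixes g :: "'n::finite \<Rightarrow> real \<Rightarrow> ennreal"
  assumes [measurable]: "\<And>k. g k \<in> borel_measurable borel"
  shows "(\<integral>\<^sup>+\<eta>. (\<Prod>k\<in>UNIV. g k (\<eta> $ k)) \<partial>(lborel :: (real ^ 'n) measure))
       = (\<Prod>k\<in>UNIV. \<integral>\<^sup>+u. g k u \<partial>lborel)"
proof -
  define f where "f b = g (SOME k. axis k (1::real) = b)" for b :: "real ^ 'n"
  have f_axis: "f (axis k 1) = g k" for k
    unfolding f_def by (rule arg_cong[where f = g], rule some_equality) (auto simp: axis_eq_axis)
  have "(\<integral>\<^sup>+\<eta>. (\<Prod>b\<in>Basis. f b (\<eta> \<bullet> b)) \<partial>(lborel :: (real ^ 'n) measure))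
      = (\<Prod>b\<in>Basis. \<integral>\<^sup>+u. f b u \<partial>lborel)"
    by (rule nn_integral_lborel_prod) (auto simp: f_def)
  then show ?thesis by (simp add: prod_Basis_vec f_axis inner_axis)
qed

lemma
  fixes h :: "real \<Rightarrow> real"
  assumes [measurable]: "h \<in> borel_measurable borel" and h_nonneg: "\<And>u. 0 \<le> h u"
    and int_h: "integrable lborel h" and int_moment: "integrable lborel (\<lambda>u. h u * \<bar>u\<bar>)"
  shows finite_measure_iid_density: "finite_measure (iid_density h :: (real ^ 'n::finite) measure)"
    and integrable_iid_density_nth: "integrable (iid_density h) (\<lambda>\<eta>::real ^ 'n. \<eta> $ m)"
proof -
  let ?N = "iid_density h :: (real ^ 'n) measure"
  define g where "g k u = ennreal (h u * (if k = m then \<bar>u\<bar> else 1))" for k u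
  have [measurable]: "g k \<in> borel_measurable borel" for k unfolding g_def by measurable
  have finite_factor: "(\<integral>\<^sup>+u. g k u \<partial>lborel) < \<infinity>" for k
    using int_h int_moment h_nonneg
    by (cases "k = m") (auto simp: g_def integrable_iff_bounded abs_mult)
  have "emeasure ?N (space ?N)
      = (\<integral>\<^sup>+\<eta>. (\<Prod>k\<in>UNIV. ennreal (h (\<eta> $ k))) \<partial>(lborel :: (real ^ 'n) measure))"
    unfolding iid_density_def by (simp add: emeasure_density prod_ennreal h_nonneg)
  also have "\<dots> = (\<Prod>k\<in>(UNIV :: 'n set). \<integral>\<^sup>+u. ennreal (h u) \<partial>lborel)"
    by (rule nn_integral_lborel_prod_vec) measurable
  also have "\<dots> < \<infinity>"
    using int_h h_nonneg by (simp add: integrable_iff_bounded power_less_top_ennreal)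
  finally show "finite_measure ?N"
    by (intro finite_measureI) simp
  have "(\<integral>\<^sup>+\<eta>. ennreal (norm (\<eta> $ m)) \<partial>?N)
      = (\<integral>\<^sup>+\<eta>. (\<Prod>k\<in>UNIV. g k (\<eta> $ k)) \<partial>(lborel :: (real ^ 'n) measure))"
    unfolding iid_density_def
    by (subst nn_integral_density)
       (auto intro!: nn_integral_cong simp: g_def prod_ennreal h_nonneg ennreal_mult[symmetric]
         prod_nonneg prod.distrib)
  also have "\<dots> = (\<Prod>k\<in>(UNIV :: 'n set). \<integral>\<^sup>+u. g k u \<partial>lborel)"
    by (rule nn_integral_lborel_prod_vec) measurable
  also have "\<dots> < \<infinity>"
    by (rule ennreal_prod_less_top) (rule finite_factor)
  finally show "integrable ?N (\<lambda>\<eta>. \<eta> $ m)"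
    by (simp add: integrable_iff_bounded iid_density_def)
qed

section \<open>Coordinate permutations and symmetrization\<close>

definition permute_vec :: "('n \<Rightarrow> 'n) \<Rightarrow> real ^ 'n \<Rightarrow> real ^ 'n" where
  "permute_vec \<tau> v = (\<chi> k. v $ \<tau> k)"

lemma permute_vec_nth [simp]: "permute_vec \<tau> v $ k = v $ \<tau> k"
  by (simp add: permute_vec_def)

lemma permute_vec_add: "permute_vec \<tau> (v + w) = permute_vec \<tau> v + permute_vec \<tau> w"
  by (simp add: vec_eq_iff)

lemma continuous_permute_vec: "continuous_on S (permute_vec \<tau>)"
  unfolding permute_vec_def by (intro continuous_intros)

lemma borel_measurable_permute_vec [measurable]: "permute_vec \<tau> \<in> borel_measurable borel"
  by (intro borel_measurable_continuous_onI continuous_permute_vec)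

lemma lborel_distr_permute_vec:
  fixes \<tau> :: "'n::finite \<Rightarrow> 'n"
  assumes \<tau>: "\<tau> permutes UNIV"
  shows "distr lborel borel (permute_vec \<tau>) = (lborel :: (real ^ 'n) measure)"
proof -
  have "lborel = distr lborel borel (permute_vec \<tau>)"
  proof (rule lborel_eqI)
    fix l u :: "real ^ 'n"
    assume le: "\<And>b. b \<in> Basis \<Longrightarrow> l \<bullet> b \<le> u \<bullet> b"
    have l_le_u: "l $ k \<le> u $ k" for k
      using le[of "axis k 1"] by (auto simp: inner_axis Basis_vec_def)
    have reindex_all: "(\<forall>k. P k (\<tau> k)) \<longleftrightarrow> (\<forall>m. P (inv \<tau> m) m)" for P
      by (metis permutes_inverses[OF \<tau>])
    have "permute_vec \<tau> -` box l u = box (permute_vec (inv \<tau>) l) (permute_vec (inv \<tau>) u)"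
      unfolding set_eq_iff vimage_eq mem_box_cart permute_vec_nth
      using reindex_all[of "\<lambda>a b. l $ a < _ $ b \<and> _ $ b < u $ a"] by simp
    then have "emeasure (distr lborel borel (permute_vec \<tau>)) (box l u)
        = emeasure lborel (box (permute_vec (inv \<tau>) l) (permute_vec (inv \<tau>) u))"
      by (simp add: emeasure_distr)
    also have "\<dots> = (\<Prod>b\<in>Basis. (permute_vec (inv \<tau>) u - permute_vec (inv \<tau>) l) \<bullet> b)"
      by (rule emeasure_lborel_box) (auto simp: Basis_vec_def inner_axis l_le_u)
    also have "\<dots> = (\<Prod>k\<in>UNIV. u $ inv \<tau> k - l $ inv \<tau> k)"
      by (simp add: prod_Basis_vec inner_axis)
    also have "\<dots> = (\<Prod>k\<in>UNIV. u $ k - l $ k)"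
      using prod.permute[OF permutes_inv[OF \<tau>], of "\<lambda>k. u $ k - l $ k"] by (simp add: o_def)
    also have "\<dots> = (\<Prod>b\<in>Basis. (u - l) \<bullet> b)"
      by (simp add: prod_Basis_vec inner_axis)
    finally show "emeasure (distr lborel borel (permute_vec \<tau>)) (box l u) = (\<Prod>b\<in>Basis. (u - l) \<bullet> b)" .
  qed simp
  then show ?thesis by simp
qed

lemma lborel_distr_permute_vec_plus:
  fixes \<tau> :: "'n::finite \<Rightarrow> 'n"
  assumes "\<tau> permutes UNIV"
  shows "distr lborel borel (\<lambda>v. permute_vec \<tau> v + a) = (lborel :: (real ^ 'n) measure)"
proof -
  have "distr lborel borel (\<lambda>v. permute_vec \<tau> v + a)
      = distr (distr lborel borel (permute_vec \<tau>)) borel ((+) a)"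
    by (subst distr_distr) (auto simp: o_def add.commute)
  then show ?thesis
    by (simp add: lborel_distr_permute_vec[OF assms] lborel_distr_plus)
qed

lemma integral_density_nonneg_antisymmetric:
  fixes f F \<phi> :: "'a::euclidean_space \<Rightarrow> _"
  assumes [measurable]: "f \<in> borel_measurable borel" "\<phi> \<in> borel_measurable borel"
      "F \<in> borel_measurable borel"
    and f_nonneg: "\<And>\<eta>. 0 \<le> f \<eta>"
    and \<phi>_preserving: "distr lborel borel \<phi> = lborel"
    and int_F: "integrable (density lborel (\<lambda>\<eta>. ennreal (f \<eta>))) F"
    and F_anti: "\<And>\<eta>. F (\<phi> \<eta>) = - F \<eta>"
    and sign: "\<And>\<eta>. 0 \<le> (f \<eta> - f (\<phi> \<eta>)) * (F \<eta> :: real)"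
  shows "0 \<le> (\<integral>\<eta>. F \<eta> \<partial>density lborel (\<lambda>\<eta>. ennreal (f \<eta>)))"
proof -
  let ?G = "\<lambda>\<eta>. f \<eta> * F \<eta>"
  have int_G: "integrable lborel ?G"
    using int_F by (subst (asm) integrable_density) (auto simp: f_nonneg)
  have "integrable lborel (\<lambda>\<eta>. ?G (\<phi> \<eta>))"
    using integrable_distr_eq[of \<phi> lborel borel ?G] int_G \<phi>_preserving by simp
  then have int_G\<phi>: "integrable lborel (\<lambda>\<eta>. f (\<phi> \<eta>) * F \<eta>)"
    by (simp add: F_anti)
  have "(\<integral>\<eta>. ?G \<eta> \<partial>lborel) = (\<integral>\<eta>. ?G (\<phi> \<eta>) \<partial>lborel)"
    using integral_distr[of \<phi> lborel borel ?G] \<phi>_preserving by simp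
  then have G\<phi>: "(\<integral>\<eta>. f (\<phi> \<eta>) * F \<eta> \<partial>lborel) = - (\<integral>\<eta>. ?G \<eta> \<partial>lborel)"
    by (simp add: F_anti)
  have "0 \<le> (\<integral>\<eta>. (f \<eta> - f (\<phi> \<eta>)) * F \<eta> \<partial>lborel)"
    by (rule Bochner_Integration.integral_nonneg) (rule sign)
  also have "\<dots> = 2 * (\<integral>\<eta>. ?G \<eta> \<partial>lborel)"
    using Bochner_Integration.integral_diff[OF int_G int_G\<phi>] G\<phi> by (simp add: left_diff_distrib)
  finally show ?thesis
    by (simp add: integral_density f_nonneg)
qed

lemma convex_on_spread_le:
  fixes \<psi> :: "real \<Rightarrow> real"
  assumes \<psi>: "convex_on UNIV \<psi>"
    and "a \<le> u" "a \<le> v" "u \<le> c" "v \<le> c" and sum_eq: "u + v = a + c"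
  shows "\<psi> u + \<psi> v \<le> \<psi> a + \<psi> c"
proof (cases "a = c")
  case True
  then have "u = a" "v = a" using assms by linarith+
  then show ?thesis using True by simp
next
  case False
  then have d: "c - a > 0" using assms by simp
  have on_ac: "convex_on {a..c} \<psi>" by (rule convex_on_subset[OF \<psi>]) auto
  have "\<psi> u \<le> (\<psi> c - \<psi> a) / (c - a) * (u - a) + \<psi> a"
    using convex_onD_Icc'[OF on_ac] assms by simp
  moreover have "\<psi> v \<le> (\<psi> c - \<psi> a) / (c - a) * (v - a) + \<psi> a"
    using convex_onD_Icc'[OF on_ac] assms by simp
  moreover have "(\<psi> c - \<psi> a) / (c - a) * (u - a) + (\<psi> c - \<psi> a) / (c - a) * (v - a) = \<psi> c - \<psi> a"
  proof -
    have "(u - a) + (v - a) = c - a" using sum_eq by simp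
    then have "(\<psi> c - \<psi> a) / (c - a) * ((u - a) + (v - a)) = \<psi> c - \<psi> a"
      using d by simp
    then show ?thesis by (simp only: distrib_left)
  qed
  ultimately show ?thesis by linarith
qed

lemma exp_neg_convex_spread_le:
  fixes \<psi> :: "real \<Rightarrow> real"
  assumes "convex_on UNIV \<psi>" "0 \<le> c\<^sub>0" and h_eq: "\<And>u. h u = c\<^sub>0 * exp (- \<psi> u)"
    and "a \<le> u" "a \<le> v" "u \<le> c" "v \<le> c" "u + v = a + c"
  shows "h a * h c \<le> h u * h v"
proof -
  have "exp (- \<psi> a) * exp (- \<psi> c) \<le> exp (- \<psi> u) * exp (- \<psi> v)"
    using convex_on_spread_le[OF assms(1,4-8)] by (simp add: exp_add[symmetric])
  then have "c\<^sub>0 * c\<^sub>0 * (exp (- \<psi> a) * exp (- \<psi> c)) \<le> c\<^sub>0 * c\<^sub>0 * (exp (- \<psi> u) * exp (- \<psi> v))"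
    using assms(2) by (simp add: mult_left_mono)
  then show ?thesis by (simp add: h_eq ac_simps)
qed

lemma integrable_exp_neg_abs_moment:
  fixes b :: real
  assumes b: "0 < b"
  shows "integrable lborel (\<lambda>u. exp (- \<bar>u\<bar> / b) * \<bar>u\<bar> ^ k)"
proof -
  define E where "E u = erlang_density 0 (1 / b) u * u ^ k" for u
  have [measurable]: "E \<in> borel_measurable borel" unfolding E_def by measurable
  have E_nonneg: "0 \<le> E u" for u
    using b by (auto simp: E_def erlang_density_def)
  have int_E: "integrable lborel E"
    using nn_integral_erlang_ith_moment[of "1 / b" 0 k] b E_nonneg
    by (simp add: integrable_iff_bounded E_def)
  then have int_E_neg: "integrable lborel (\<lambda>u. E (- u))"
    using lborel_integrable_real_affine[of E "-1" 0] by simp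
  have bound: "exp (- \<bar>u\<bar> / b) * \<bar>u\<bar> ^ k \<le> b * (E u + E (- u))" for u
  proof (cases "0 \<le> u")
    case True
    have "exp (- \<bar>u\<bar> / b) * \<bar>u\<bar> ^ k = b * E u"
      using True b by (simp add: E_def erlang_density_def field_simps)
    then show ?thesis using b E_nonneg[of "- u"] by simp
  next
    case False
    have "exp (- \<bar>u\<bar> / b) * \<bar>u\<bar> ^ k = b * E (- u)"
      using False b by (simp add: E_def erlang_density_def field_simps)
    then show ?thesis using b E_nonneg[of u] by simp
  qed
  have "integrable lborel (\<lambda>u. b * (E u + E (- u)))"
    using int_E int_E_neg by simp
  then show ?thesis
    by (rule Bochner_Integration.integrable_bound) (use bound b E_nonneg in auto)
qed

section \<open>The projections onto the hyperplane and the simplex\<close>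

lemma closest_point_eqI:
  fixes S :: "'a::euclidean_space set"
  assumes "convex S" "closed S" "p \<in> S"
    and obtuse: "\<And>q. q \<in> S \<Longrightarrow> inner (y - p) (q - p) \<le> 0"
  shows "closest_point S y = p"
proof -
  have "dist y p \<le> dist y q" if "q \<in> S" for q
  proof -
    have "norm (y - q)^2 = norm (y - p)^2 - 2 * inner (y - p) (q - p) + norm (q - p)^2"
      by (simp add: power2_norm_eq_inner inner_diff_left inner_diff_right inner_commute)
    then have "norm (y - p)^2 \<le> norm (y - q)^2"
      using obtuse[OF that] by (smt (verit) zero_le_power2)
    then show ?thesis by (simp add: dist_norm power2_le_iff_abs_le)
  qed
  then show ?thesis using closest_point_unique[OF assms(1-3)] by auto
qed

lemma closed_K_S: "closed (K_S C :: (real ^ 'n) set)"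
  unfolding K_S_def by (intro closed_Collect_eq continuous_intros)

lemma convex_K_S: "convex (K_S C :: (real ^ 'n) set)"
  unfolding K_S_def convex_def
  by (auto simp: sum.distrib sum_distrib_left[symmetric] distrib_right[symmetric])

lemma closed_K_Splus: "closed (K_Splus C :: (real ^ 'n) set)"
proof -
  have "K_Splus C = K_S C \<inter> (\<Inter>k. {v :: real ^ 'n. 0 \<le> v $ k})"
    unfolding K_Splus_def by auto
  then show ?thesis
    by (auto intro!: closed_Int closed_K_S closed_INT closed_Collect_le continuous_intros)
qed

lemma convex_K_Splus: "convex (K_Splus C :: (real ^ 'n) set)"
  unfolding K_Splus_def K_S_def convex_def
  by (auto simp: sum.distrib sum_distrib_left[symmetric] distrib_right[symmetric])

lemma K_Splus_nonempty:
  assumes "0 \<le> C" shows "K_Splus C \<noteq> ({} :: (real ^ 'n) set)"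
proof -
  have "axis undefined C \<in> (K_Splus C :: (real ^ 'n) set)"
    using assms by (auto simp: K_Splus_def K_S_def axis_def sum.delta)
  then show ?thesis by auto
qed

lemma proj_S_eq:
  "proj_S C (y :: real ^ 'n) = (\<chi> k. y $ k - ((\<Sum>l\<in>UNIV. y $ l) - C) / real CARD('n))"
proof -
  define c where "c = ((\<Sum>l\<in>UNIV. y $ l) - C) / real CARD('n)"
  define p :: "real ^ 'n" where "p = (\<chi> k. y $ k - c)"
  have sum_p: "(\<Sum>k\<in>UNIV. p $ k) = C"
    unfolding p_def c_def by (simp add: sum_subtractf)
  have "closest_point (K_S C) y = p"
  proof (rule closest_point_eqI[OF convex_K_S closed_K_S])
    show "p \<in> K_S C" using sum_p by (simp add: K_S_def)
    fix q :: "real ^ 'n"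
    assume "q \<in> K_S C"
    then have "(\<Sum>k\<in>UNIV. q $ k) = C" by (simp add: K_S_def)
    then have "(\<Sum>k\<in>UNIV. c * (q $ k - p $ k)) = 0"
      using sum_p by (simp add: sum_distrib_left[symmetric] sum_subtractf)
    then show "inner (y - p) (q - p) \<le> 0"
      by (simp add: inner_vec_def p_def)
  qed
  then show ?thesis unfolding proj_S_def p_def c_def .
qed

lemma sum_proj_S: "(\<Sum>k\<in>UNIV. proj_S C (y :: real ^ 'n) $ k) = C"
  unfolding proj_S_eq by (simp add: sum_subtractf)

lemma proj_S_permute_vec:
  assumes "\<tau> permutes UNIV"
  shows "proj_S C (permute_vec \<tau> y) = permute_vec \<tau> (proj_S C y)"
  unfolding proj_S_eq using sum.permute[OF assms, of "\<lambda>l. y $ l"]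
  by (simp add: vec_eq_iff o_def)

definition excess :: "real ^ 'n \<Rightarrow> real \<Rightarrow> real" where
  "excess z t = (\<Sum>k\<in>UNIV. max (z $ k - t) 0)"

lemma excess_pos_imp_above:
  assumes "0 < excess z t" shows "\<exists>k. t < z $ k"
proof (rule ccontr)
  assume "\<nexists>k. t < z $ k"
  then have "excess z t = 0" unfolding excess_def by (auto intro!: sum.neutral simp: not_less)
  with assms show False by simp
qed

lemma excess_strict_antimono:
  assumes "0 < excess z t" "s < t"
  shows "excess z t < excess z s"
proof -
  obtain k where "t < z $ k" using excess_pos_imp_above[OF assms(1)] by blast
  then show ?thesis
    unfolding excess_def using assms(2)
    by (intro sum_strict_mono_ex1) (auto intro!: exI[of _ k])
qed

lemma excess_permute_vec:
  assumes "\<tau> permutes UNIV"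
  shows "excess (permute_vec \<tau> z) t = excess z t"
  unfolding excess_def using sum.permute[OF assms, of "\<lambda>l. max (z $ l - t) 0"]
  by (simp add: o_def)

lemma excess_eq_exists:
  assumes "0 < C" "(\<Sum>k\<in>UNIV. z $ k) = C"
  shows "\<exists>t\<ge>0. excess z t = C"
proof -
  define M where "M = (\<Sum>k\<in>UNIV. \<bar>z $ k\<bar>)"
  have "z $ k \<le> M" for k
    using member_le_sum[of k UNIV "\<lambda>k. \<bar>z $ k\<bar>"] unfolding M_def by simp
  then have "excess z M = 0"
    unfolding excess_def by (auto intro!: sum.neutral)
  moreover have "C \<le> excess z 0"
    unfolding excess_def using assms(2) by (auto intro!: sum_mono)
  moreover have "continuous_on {0..M} (excess z)"
    unfolding excess_def by (intro continuous_intros)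
  moreover have "0 \<le> M" unfolding M_def by (simp add: sum_nonneg)
  ultimately show ?thesis
    using IVT2'[of "excess z" M C 0] assms(1) by fastforce
qed

lemma T_thr_eqI:
  assumes "0 < C" "0 \<le> t" "excess z t = C"
  shows "T_thr C z = t"
  unfolding T_thr_def
proof (rule the_equality)
  show "0 \<le> t \<and> (\<Sum>k\<in>UNIV. max (z $ k - t) 0) = C"
    using assms by (simp add: excess_def)
next
  fix s
  assume "0 \<le> s \<and> (\<Sum>k\<in>UNIV. max (z $ k - s) 0) = C"
  then have "excess z s = C" by (simp add: excess_def)
  then show "s = t"
    using excess_strict_antimono[of z s t] excess_strict_antimono[of z t s] assms
    by (cases s t rule: linorder_cases) auto
qed

lemma
  assumes "0 < C" "(\<Sum>k\<in>UNIV. z $ k) = C"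
  shows T_thr_nonneg: "0 \<le> T_thr C z" and excess_T_thr: "excess z (T_thr C z) = C"
proof -
  obtain t where "0 \<le> t" "excess z t = C" using excess_eq_exists[OF assms] by blast
  moreover from this have "T_thr C z = t" by (rule T_thr_eqI[OF assms(1)])
  ultimately show "0 \<le> T_thr C z" "excess z (T_thr C z) = C" by simp_all
qed

lemma T_thr_permute_vec:
  assumes "\<tau> permutes UNIV" "0 < C" "(\<Sum>k\<in>UNIV. z $ k) = C"
  shows "T_thr C (permute_vec \<tau> z) = T_thr C z"
proof -
  have "excess (permute_vec \<tau> z) (T_thr C z) = C"
    by (simp add: excess_permute_vec[OF assms(1)] excess_T_thr[OF assms(2,3)])
  then show ?thesis by (rule T_thr_eqI[OF assms(2) T_thr_nonneg[OF assms(2,3)]])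
qed

lemma T_thr_le_sum_abs:
  assumes "0 < C" "(\<Sum>k\<in>UNIV. z $ k) = C"
  shows "T_thr C z \<le> (\<Sum>k\<in>UNIV. \<bar>z $ k\<bar>)"
proof -
  obtain k where "T_thr C z < z $ k"
    using excess_pos_imp_above excess_T_thr[OF assms] assms(1) by metis
  moreover have "\<bar>z $ k\<bar> \<le> (\<Sum>k\<in>UNIV. \<bar>z $ k\<bar>)" by (rule member_le_sum) auto
  ultimately show ?thesis by simp
qed

lemma proj_Splus_eq:
  fixes y :: "real ^ 'n"
  assumes C: "0 < C"
  shows "proj_Splus C y = (\<chi> k. max (proj_S C y $ k - T_thr C (proj_S C y)) 0)"
proof -
  define z where "z = proj_S C y"
  define c where "c = ((\<Sum>l\<in>UNIV. y $ l) - C) / real CARD('n)"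
  define t where "t = T_thr C z"
  define p :: "real ^ 'n" where "p = (\<chi> k. max (z $ k - t) 0)"
  have z_eq: "z $ k = y $ k - c" for k unfolding z_def c_def proj_S_eq by simp
  have sum_z: "(\<Sum>k\<in>UNIV. z $ k) = C" unfolding z_def by (rule sum_proj_S)
  have sum_p: "(\<Sum>k\<in>UNIV. p $ k) = C"
    using excess_T_thr[OF C sum_z] unfolding p_def t_def excess_def by simp
  have "closest_point (K_Splus C) y = p"
  proof (rule closest_point_eqI[OF convex_K_Splus closed_K_Splus])
    show "p \<in> K_Splus C" using sum_p by (simp add: K_Splus_def K_S_def p_def)
    fix q :: "real ^ 'n"
    assume "q \<in> K_Splus C"
    then have sum_q: "(\<Sum>k\<in>UNIV. q $ k) = C" and q_nonneg: "\<And>k. 0 \<le> q $ k"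
      by (auto simp: K_Splus_def K_S_def)
    \<comment> \<open>On the support of p the residual y - p is the constant t + c; elsewhere it is at most t + c.\<close>
    have "(y $ k - p $ k) * (q $ k - p $ k) \<le> (t + c) * (q $ k - p $ k)" for k
      using z_eq[of k] q_nonneg[of k] by (cases "t \<le> z $ k") (auto simp: p_def mult_right_mono add.commute)
    then have "inner (y - p) (q - p) \<le> (\<Sum>k\<in>UNIV. (t + c) * (q $ k - p $ k))"
      unfolding inner_vec_def by (auto intro!: sum_mono)
    also have "\<dots> = (t + c) * ((\<Sum>k\<in>UNIV. q $ k) - (\<Sum>k\<in>UNIV. p $ k))"
      by (simp add: sum_distrib_left[symmetric] sum_subtractf)
    finally show "inner (y - p) (q - p) \<le> 0" using sum_q sum_p by simp
  qed
  then show ?thesis unfolding proj_Splus_def p_def t_def z_def .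
qed

lemma T_thr_eq_Max:
  assumes C: "0 < C"
  shows "T_thr C (proj_S C y) = Max (range (\<lambda>k. proj_S C y $ k - proj_Splus C y $ k))"
proof (rule sym, rule Max_eqI)
  let ?z = "proj_S C y" and ?t = "T_thr C (proj_S C y)"
  have above: "\<exists>k. ?t < ?z $ k"
    using excess_pos_imp_above excess_T_thr[OF C sum_proj_S] C by metis
  show "finite (range (\<lambda>k. ?z $ k - proj_Splus C y $ k))" by simp
  show "r \<le> ?t" if "r \<in> range (\<lambda>k. ?z $ k - proj_Splus C y $ k)" for r
    using that by (auto simp: proj_Splus_eq[OF C])
  show "?t \<in> range (\<lambda>k. ?z $ k - proj_Splus C y $ k)"
  proof -
    obtain k where "?t < ?z $ k" using above by blast
    then have "?t = ?z $ k - proj_Splus C y $ k" by (simp add: proj_Splus_eq[OF C])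
    then show ?thesis by (rule range_eqI)
  qed
qed

section \<open>The gap between the two estimators\<close>

definition proj_gap :: "real \<Rightarrow> real ^ 'n \<Rightarrow> real ^ 'n" where
  "proj_gap C y = proj_Splus C y - pos_part (proj_S C y)"

lemma proj_gap_nth:
  assumes "0 < C"
  shows "proj_gap C y $ k
    = max (proj_S C y $ k - T_thr C (proj_S C y)) 0 - max (proj_S C y $ k) 0"
  by (simp add: proj_gap_def proj_Splus_eq[OF assms] pos_part_def)

lemma proj_gap_permute_vec:
  assumes "\<tau> permutes UNIV" "0 < C"
  shows "proj_gap C (permute_vec \<tau> y) = permute_vec \<tau> (proj_gap C y)"
  by (simp add: vec_eq_iff proj_gap_nth[OF assms(2)] proj_S_permute_vec[OF assms(1)]
      T_thr_permute_vec[OF assms sum_proj_S])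

lemma proj_gap_diff_le_T_thr:
  assumes "0 < C"
  shows "proj_gap C y $ i - proj_gap C y $ j \<le> T_thr C (proj_S C y)"
  using T_thr_nonneg[OF assms sum_proj_S, of y] by (auto simp: proj_gap_nth[OF assms] max_def)

lemma proj_gap_diff_nonneg:
  assumes "0 < C" "proj_S C y $ i \<le> proj_S C y $ j"
  shows "0 \<le> proj_gap C y $ i - proj_gap C y $ j"
  using T_thr_nonneg[OF assms(1) sum_proj_S, of y] assms(2)
  by (auto simp: proj_gap_nth[OF assms(1)] max_def)

definition swap_noise :: "'n \<Rightarrow> 'n \<Rightarrow> real ^ 'n \<Rightarrow> real ^ 'n \<Rightarrow> real ^ 'n" where
  "swap_noise i j x \<eta> = permute_vec (Transposition.transpose i j) (x + \<eta>) - x"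

lemma lborel_distr_swap_noise:
  "distr lborel borel (swap_noise i j x) = (lborel :: (real ^ 'n::finite) measure)"
proof -
  have "swap_noise i j x = (\<lambda>\<eta>. permute_vec (Transposition.transpose i j) \<eta>
      + (permute_vec (Transposition.transpose i j) x - x))"
    by (auto simp: swap_noise_def permute_vec_add)
  then show ?thesis
    by (simp add: lborel_distr_permute_vec_plus permutes_swap_id)
qed

lemma proj_gap_diff_swap_noise:
  assumes "0 < C"
  shows "proj_gap C (x + swap_noise i j x \<eta>) $ i - proj_gap C (x + swap_noise i j x \<eta>) $ j
    = - (proj_gap C (x + \<eta>) $ i - proj_gap C (x + \<eta>) $ j)"
  by (simp add: swap_noise_def proj_gap_permute_vec[OF permutes_swap_id assms])

lemma integrable_vec_nth: "integrable M f \<Longrightarrow> integrable M (\<lambda>x. f x $ k)"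
  by (rule integrable_bounded_linear[OF bounded_linear_vec_nth])

lemma integral_vec_nth: "integrable M f \<Longrightarrow> (\<integral>x. f x \<partial>M) $ k = (\<integral>x. f x $ k \<partial>M)"
  using integral_bounded_linear[OF bounded_linear_vec_nth] by metis

lemma continuous_proj_S: "continuous_on UNIV (proj_S C :: real ^ 'n \<Rightarrow> _)"
  unfolding proj_S_eq by (intro continuous_intros) simp

lemma continuous_proj_Splus:
  assumes "0 \<le> C" shows "continuous_on UNIV (proj_Splus C :: real ^ 'n \<Rightarrow> _)"
  unfolding proj_Splus_def
  by (rule continuous_on_closest_point[OF convex_K_Splus closed_K_Splus K_Splus_nonempty[OF assms]])

context
  fixes N :: "(real ^ 'n) measure"
  assumes finite_N: "finite_measure N" and sets_N: "sets N = sets borel"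
    and integrable_nth: "\<And>m. integrable N (\<lambda>\<eta>. \<eta> $ m)"
begin

lemma borel_measurable_continuous_N:
  "continuous_on UNIV f \<Longrightarrow> (f :: real ^ 'n \<Rightarrow> 'b::topological_space) \<in> borel_measurable N"
  using borel_measurable_continuous_onI by (simp add: measurable_cong_sets[OF sets_N])

lemma integrable_sum_abs_proj_S:
  "integrable N (\<lambda>\<eta>. \<Sum>k\<in>UNIV. \<bar>proj_S C (x + \<eta>) $ k\<bar>)"
proof -
  interpret finite_measure N by (rule finite_N)
  have "integrable N (\<lambda>\<eta>. proj_S C (x + \<eta>) $ k)" for k
    unfolding proj_S_eq using integrable_nth by simp
  then show ?thesis by auto
qed

lemma integrable_proj_Splus:
  assumes C: "0 < C"
  shows "integrable N (\<lambda>\<eta>. proj_Splus C (x + \<eta>))"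
proof (rule finite_measure.integrable_const_bound[OF finite_N, where B = C])
  have "proj_Splus C (x + \<eta>) \<in> K_Splus C" for \<eta>
    unfolding proj_Splus_def
    by (rule closest_point_in_set[OF closed_K_Splus K_Splus_nonempty]) (use C in simp)
  then have "norm (proj_Splus C (x + \<eta>)) \<le> C" for \<eta>
    using norm_le_l1_cart[of "proj_Splus C (x + \<eta>)"] by (simp add: K_Splus_def K_S_def)
  then show "AE \<eta> in N. norm (proj_Splus C (x + \<eta>)) \<le> C" by simp
  show "(\<lambda>\<eta>. proj_Splus C (x + \<eta>)) \<in> borel_measurable N"
    by (intro borel_measurable_continuous_N continuous_on_compose2[OF continuous_proj_Splus]
        continuous_intros) (use C in auto)
qed

lemma integrable_pos_part_proj_S: "integrable N (\<lambda>\<eta>. pos_part (proj_S C (x + \<eta>)))"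
proof (rule Bochner_Integration.integrable_bound[OF integrable_sum_abs_proj_S])
  let ?z = "\<lambda>\<eta>. proj_S C (x + \<eta>)"
  show "(\<lambda>\<eta>. pos_part (?z \<eta>)) \<in> borel_measurable N"
    unfolding pos_part_def
    by (intro borel_measurable_continuous_N continuous_intros
        continuous_on_compose2[OF continuous_proj_S]) auto
  have "norm (pos_part (?z \<eta>)) \<le> (\<Sum>k\<in>UNIV. \<bar>pos_part (?z \<eta>) $ k\<bar>)" for \<eta>
    by (rule norm_le_l1_cart)
  also have "\<dots> \<eta> \<le> (\<Sum>k\<in>UNIV. \<bar>?z \<eta> $ k\<bar>)" for \<eta>
    by (intro sum_mono) (simp add: pos_part_def)
  finally show "AE \<eta> in N. norm (pos_part (?z \<eta>)) \<le> norm (\<Sum>k\<in>UNIV. \<bar>?z \<eta> $ k\<bar>)"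
    by simp
qed

lemma integrable_T_thr_proj_S:
  assumes C: "0 < C"
  shows "integrable N (\<lambda>\<eta>. T_thr C (proj_S C (x + \<eta>)))"
proof (rule Bochner_Integration.integrable_bound[OF integrable_sum_abs_proj_S])
  let ?z = "\<lambda>\<eta>. proj_S C (x + \<eta>)"
  show "(\<lambda>\<eta>. T_thr C (?z \<eta>)) \<in> borel_measurable N"
    unfolding T_thr_eq_Max[OF C]
    by (intro borel_measurable_Max borel_measurable_continuous_N continuous_intros
        continuous_on_compose2[OF continuous_proj_S] continuous_on_compose2[OF continuous_proj_Splus])
       (use C in auto)
  have "norm (T_thr C (?z \<eta>)) \<le> (\<Sum>k\<in>UNIV. \<bar>?z \<eta> $ k\<bar>)" for \<eta>
    using T_thr_nonneg[OF C sum_proj_S, of "x + \<eta>"] T_thr_le_sum_abs[OF C sum_proj_S, of "x + \<eta>"]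
    by simp
  then show "AE \<eta> in N. norm (T_thr C (?z \<eta>)) \<le> norm (\<Sum>k\<in>UNIV. \<bar>?z \<eta> $ k\<bar>)"
    by simp
qed

lemma bias_diff_eq_integral_proj_gap:
  assumes "0 < C"
  shows "(bias N x (proj_Splus C) $ i - bias N x (proj_Splus C) $ j)
           - (bias N x (\<lambda>y. pos_part (proj_S C y)) $ i - bias N x (\<lambda>y. pos_part (proj_S C y)) $ j)
         = (\<integral>\<eta>. proj_gap C (x + \<eta>) $ i - proj_gap C (x + \<eta>) $ j \<partial>N)"
proof -
  note int_P = integrable_proj_Splus[OF assms, of x]
  note int_Q = integrable_pos_part_proj_S[of C x]
  have int_gap: "integrable N (\<lambda>\<eta>. proj_gap C (x + \<eta>))"
    unfolding proj_gap_def using int_P int_Q by simp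
  have "bias N x (proj_Splus C) - bias N x (\<lambda>y. pos_part (proj_S C y))
      = (\<integral>\<eta>. proj_gap C (x + \<eta>) \<partial>N)"
    unfolding bias_def proj_gap_def using int_P int_Q by simp
  then have diff_k: "bias N x (proj_Splus C) $ k - bias N x (\<lambda>y. pos_part (proj_S C y)) $ k
      = (\<integral>\<eta>. proj_gap C (x + \<eta>) $ k \<partial>N)" for k
    by (metis integral_vec_nth[OF int_gap] vector_minus_component)
  have "(\<integral>\<eta>. proj_gap C (x + \<eta>) $ i - proj_gap C (x + \<eta>) $ j \<partial>N)
      = (\<integral>\<eta>. proj_gap C (x + \<eta>) $ i \<partial>N) - (\<integral>\<eta>. proj_gap C (x + \<eta>) $ j \<partial>N)"
    by (intro Bochner_Integration.integral_diff integrable_vec_nth[OF int_gap])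
  with diff_k[of i] diff_k[of j] show ?thesis by linarith
qed

end

section \<open>Log-concave product noise\<close>

locale log_concave_density =
  fixes h :: "real \<Rightarrow> real"
  assumes measurable [measurable]: "h \<in> borel_measurable borel"
    and nonneg: "0 \<le> h u"
    and integrable: "integrable lborel h"
    and integrable_moment: "integrable lborel (\<lambda>u. h u * \<bar>u\<bar>)"
    \<comment> \<open>For positive h this is log-concavity: spreading two arguments apart at fixed sum
      cannot increase the product.\<close>
    and spread_le: "a \<le> u \<Longrightarrow> a \<le> v \<Longrightarrow> u \<le> c \<Longrightarrow> v \<le> c \<Longrightarrow> u + v = a + c
      \<Longrightarrow> h a * h c \<le> h u * h v"
begin

lemma prod_le_of_spread_pair:
  fixes \<xi> \<eta> :: "real ^ 'n"
  assumes "i \<noteq> j" and same: "\<And>k. k \<noteq> i \<Longrightarrow> k \<noteq> j \<Longrightarrow> \<xi> $ k = \<eta> $ k"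
    and "\<xi> $ j \<le> \<eta> $ i" "\<xi> $ j \<le> \<eta> $ j" "\<eta> $ i \<le> \<xi> $ i" "\<eta> $ j \<le> \<xi> $ i"
    and "\<eta> $ i + \<eta> $ j = \<xi> $ j + \<xi> $ i"
  shows "(\<Prod>k\<in>UNIV. h (\<xi> $ k)) \<le> (\<Prod>k\<in>UNIV. h (\<eta> $ k))"
proof -
  have split: "(\<Prod>k\<in>UNIV. h (w $ k)) = h (w $ i) * h (w $ j) * (\<Prod>k\<in>UNIV - {i, j}. h (w $ k))"
    for w :: "real ^ 'n"
    using \<open>i \<noteq> j\<close>
    by (subst prod.remove[of UNIV i], simp_all, subst prod.remove[of "UNIV - {i}" j])
       (auto simp: insert_Diff_if Diff_insert2[symmetric] mult.assoc)
  have "(\<Prod>k\<in>UNIV - {i, j}. h (\<xi> $ k)) = (\<Prod>k\<in>UNIV - {i, j}. h (\<eta> $ k))"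
    by (intro prod.cong) (auto simp: same)
  moreover have "h (\<xi> $ j) * h (\<xi> $ i) \<le> h (\<eta> $ i) * h (\<eta> $ j)"
    by (rule spread_le) (use assms in auto)
  moreover have "0 \<le> (\<Prod>k\<in>UNIV - {i, j}. h (\<eta> $ k))"
    by (simp add: prod_nonneg nonneg)
  ultimately show ?thesis
    unfolding split by (simp add: mult_right_mono mult.commute)
qed

lemma prod_diff_mul_proj_gap_diff_nonneg:
  fixes x \<eta> :: "real ^ 'n"
  assumes C: "0 < C" and ij: "x $ i \<le> x $ j" "i \<noteq> j"
  shows "0 \<le> ((\<Prod>k\<in>UNIV. h (\<eta> $ k)) - (\<Prod>k\<in>UNIV. h (swap_noise i j x \<eta> $ k)))
    * (proj_gap C (x + \<eta>) $ i - proj_gap C (x + \<eta>) $ j)"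
proof -
  let ?\<xi> = "swap_noise i j x \<eta>"
  have \<xi>_ij: "?\<xi> $ i = \<eta> $ j + (x $ j - x $ i)" "?\<xi> $ j = \<eta> $ i - (x $ j - x $ i)"
    by (simp_all add: swap_noise_def)
  have \<xi>_other: "?\<xi> $ k = \<eta> $ k" if "k \<noteq> i" "k \<noteq> j" for k
    using that by (simp add: swap_noise_def)
  have z_diff: "proj_S C (x + \<eta>) $ i - proj_S C (x + \<eta>) $ j = \<eta> $ i - (\<eta> $ j + (x $ j - x $ i))"
    by (simp add: proj_S_eq)
  show ?thesis
  proof (cases "\<eta> $ i \<le> \<eta> $ j + (x $ j - x $ i)")
    case True
    then have "(\<Prod>k\<in>UNIV. h (?\<xi> $ k)) \<le> (\<Prod>k\<in>UNIV. h (\<eta> $ k))"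
      using ij by (intro prod_le_of_spread_pair) (auto simp: \<xi>_ij \<xi>_other)
    moreover have "0 \<le> proj_gap C (x + \<eta>) $ i - proj_gap C (x + \<eta>) $ j"
      using proj_gap_diff_nonneg[OF C, of "x + \<eta>" i j] z_diff True by simp
    ultimately show ?thesis by simp
  next
    case False
    then have "(\<Prod>k\<in>UNIV. h (\<eta> $ k)) \<le> (\<Prod>k\<in>UNIV. h (?\<xi> $ k))"
      using ij by (intro prod_le_of_spread_pair) (auto simp: \<xi>_ij \<xi>_other)
    moreover have "proj_gap C (x + \<eta>) $ i - proj_gap C (x + \<eta>) $ j \<le> 0"
      using proj_gap_diff_nonneg[OF C, of "x + \<eta>" j i] z_diff False by simp
    ultimately show ?thesis by (simp add: mult_nonpos_nonpos)
  qed
qed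

lemma integral_proj_gap_diff_nonneg:
  fixes x :: "real ^ 'n"
  assumes C: "0 < C" and ij: "x $ i \<le> x $ j"
    and int_F: "integrable (iid_density h) (\<lambda>\<eta>. proj_gap C (x + \<eta>) $ i - proj_gap C (x + \<eta>) $ j)"
  shows "0 \<le> (\<integral>\<eta>. proj_gap C (x + \<eta>) $ i - proj_gap C (x + \<eta>) $ j \<partial>iid_density h)"
proof (cases "i = j")
  case False
  define F where "F \<eta> = proj_gap C (x + \<eta>) $ i - proj_gap C (x + \<eta>) $ j" for \<eta>
  define f where "f \<eta> = (\<Prod>k\<in>UNIV. h (\<eta> $ k))" for \<eta> :: "real ^ 'n"
  have [measurable]: "f \<in> borel_measurable borel" "swap_noise i j x \<in> borel_measurable borel"
    unfolding f_def[abs_def] swap_noise_def[abs_def] by measurable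
  have [measurable]: "F \<in> borel_measurable borel"
    using borel_measurable_integrable[OF int_F]
    by (simp add: F_def[abs_def] iid_density_def cong: measurable_cong_sets)
  have "0 \<le> (\<integral>\<eta>. F \<eta> \<partial>density lborel (\<lambda>\<eta>. ennreal (f \<eta>)))"
  proof (rule integral_density_nonneg_antisymmetric[where \<phi> = "swap_noise i j x"])
    show "integrable (density lborel (\<lambda>\<eta>. ennreal (f \<eta>))) F"
      using int_F by (simp add: F_def[abs_def] f_def iid_density_def)
    show "0 \<le> (f \<eta> - f (swap_noise i j x \<eta>)) * F \<eta>" for \<eta>
      unfolding f_def F_def by (rule prod_diff_mul_proj_gap_diff_nonneg[OF C ij False])
    show "F (swap_noise i j x \<eta>) = - F \<eta>" for \<eta>
      unfolding F_def by (rule proj_gap_diff_swap_noise[OF C])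
  qed (simp_all add: f_def prod_nonneg nonneg lborel_distr_swap_noise)
  then show ?thesis by (simp add: F_def f_def iid_density_def)
qed simp

theorem bias_bounds:
  fixes x :: "real ^ 'n"
  assumes C: "0 < C" and ij: "x $ i \<le> x $ j"
  defines "N \<equiv> iid_density h"
  shows "(bias N x (proj_Splus C) $ i - bias N x (proj_Splus C) $ j
           \<ge> bias N x (\<lambda>y. pos_part (proj_S C y)) $ i - bias N x (\<lambda>y. pos_part (proj_S C y)) $ j)
    \<and> (bias N x (proj_Splus C) $ i - bias N x (proj_Splus C) $ j
           \<le> bias N x (\<lambda>y. pos_part (proj_S C y)) $ i - bias N x (\<lambda>y. pos_part (proj_S C y)) $ j
              + (\<integral>\<eta>. T_thr C (proj_S C (x + \<eta>)) \<partial>N))"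
proof -
  have N: "finite_measure N" "sets N = sets borel" "\<And>m. integrable N (\<lambda>\<eta>. \<eta> $ m)"
    unfolding N_def
    using finite_measure_iid_density[OF measurable nonneg integrable integrable_moment]
      integrable_iid_density_nth[OF measurable nonneg integrable integrable_moment]
    by (auto simp: iid_density_def)
  have "integrable N (\<lambda>\<eta>. proj_gap C (x + \<eta>))"
    unfolding proj_gap_def
    using integrable_proj_Splus[OF N C, of x] integrable_pos_part_proj_S[OF N, of C x] by simp
  then have int_F: "integrable N (\<lambda>\<eta>. proj_gap C (x + \<eta>) $ i - proj_gap C (x + \<eta>) $ j)"
    by (intro Bochner_Integration.integrable_diff integrable_vec_nth)
  have "(\<integral>\<eta>. proj_gap C (x + \<eta>) $ i - proj_gap C (x + \<eta>) $ j \<partial>N)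
      \<le> (\<integral>\<eta>. T_thr C (proj_S C (x + \<eta>)) \<partial>N)"
    by (intro integral_mono int_F integrable_T_thr_proj_S[OF N C] proj_gap_diff_le_T_thr[OF C])
  moreover have "0 \<le> (\<integral>\<eta>. proj_gap C (x + \<eta>) $ i - proj_gap C (x + \<eta>) $ j \<partial>N)"
    using integral_proj_gap_diff_nonneg[OF C ij] int_F unfolding N_def by blast
  ultimately show ?thesis
    using bias_diff_eq_integral_proj_gap[OF N C, of x i j] by linarith
qed

end

lemma log_concave_density_laplace:
  assumes "0 < b"
  shows "log_concave_density (\<lambda>u. exp (- \<bar>u\<bar> / b) / (2 * b))"
proof
  have "convex_on UNIV (\<lambda>u::real. dist 0 u / b)"
    using assms by (intro convex_on_cdiv convex_on_dist) auto
  then have "convex_on UNIV (\<lambda>u::real. \<bar>u\<bar> / b)"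
    by (simp add: dist_real_def)
  then show "exp (- \<bar>a\<bar> / b) / (2 * b) * (exp (- \<bar>c\<bar> / b) / (2 * b))
      \<le> exp (- \<bar>u\<bar> / b) / (2 * b) * (exp (- \<bar>v\<bar> / b) / (2 * b))"
    if "a \<le> u" "a \<le> v" "u \<le> c" "v \<le> c" "u + v = a + c" for a u v c
    by (rule exp_neg_convex_spread_le[where c\<^sub>0 = "1 / (2 * b)"]) (use assms that in auto)
  show "integrable lborel (\<lambda>u. exp (- \<bar>u\<bar> / b) / (2 * b))"
    using integrable_exp_neg_abs_moment[OF assms, of 0] by simp
  show "integrable lborel (\<lambda>u. exp (- \<bar>u\<bar> / b) / (2 * b) * \<bar>u\<bar>)"
    using integrable_exp_neg_abs_moment[OF assms, of 1] by simp
qed (use assms in auto)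

lemma log_concave_density_normal:
  assumes "0 < \<sigma>"
  shows "log_concave_density (normal_density 0 \<sigma>)"
proof
  have "convex_on UNIV (\<lambda>u::real. u\<^sup>2 / (2 * \<sigma>\<^sup>2))"
    by (intro convex_on_cdiv convex_power2) simp
  then show "normal_density 0 \<sigma> a * normal_density 0 \<sigma> c \<le> normal_density 0 \<sigma> u * normal_density 0 \<sigma> v"
    if "a \<le> u" "a \<le> v" "u \<le> c" "v \<le> c" "u + v = a + c" for a u v c
    by (rule exp_neg_convex_spread_le[where c\<^sub>0 = "1 / sqrt (2 * pi * \<sigma>\<^sup>2)"])
       (use that in \<open>auto simp: normal_density_def\<close>)
  show "integrable lborel (\<lambda>u. normal_density 0 \<sigma> u * \<bar>u\<bar>)"
    using integrable_normal_moment_abs[OF assms, of 0 1] by simp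
qed (use assms in auto)

theorem lemma3:
  fixes x :: "real ^ 'n" and C :: real and N :: "(real ^ 'n) measure"
  assumes n2: "CARD('n) \<ge> 2"
    and C: "C > 0"
    and x: "x \<in> K_Splus C"
    and noise: "(\<exists>b>0. N = laplace_noise b) \<or> (\<exists>\<sigma>>0. N = gauss_noise \<sigma>)"
    and ij: "x $ i \<le> x $ j"
  shows "(bias N x (proj_Splus C) $ i - bias N x (proj_Splus C) $ j
           \<ge> bias N x (\<lambda>y. pos_part (proj_S C y)) $ i - bias N x (\<lambda>y. pos_part (proj_S C y)) $ j)
    \<and> (bias N x (proj_Splus C) $ i - bias N x (proj_Splus C) $ j
           \<le> bias N x (\<lambda>y. pos_part (proj_S C y)) $ i - bias N x (\<lambda>y. pos_part (proj_S C y)) $ j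
              + (\<integral>\<eta>. T_thr C (proj_S C (x + \<eta>)) \<partial>N))"
  using noise
proof (elim disjE exE conjE)
  fix b :: real
  assume "0 < b" "N = laplace_noise b"
  then show ?thesis
    using log_concave_density.bias_bounds[OF log_concave_density_laplace C ij]
    by (simp add: laplace_noise_def iid_density_def)
next
  fix \<sigma> :: real
  assume "0 < \<sigma>" "N = gauss_noise \<sigma>"
  then show ?thesis
    using log_concave_density.bias_bounds[OF log_concave_density_normal C ij]
    by (simp add: gauss_noise_def iid_density_def)
qed

end
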